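(* Let $p,q,e$ be positive integers and $\mathbf{C}=\begin{bmatrix}1 & p\\ q & 1+pq\end{bmatrix}$. The least period of the Cat map over $\mathbb{Z}_{2^e}$ is $T$ if and only if $T$ is the minimum positive integer $n$ satisfying $$\tfrac12 G_n\equiv 1 \pmod{2^e}\quad\text{and}\quad H_n\equiv 0\pmod{2^{e-h_e}},$$ where $$h_e=\begin{cases}-1 & \text{if } e_p+e_q=0;\\ \min(e_p,e_q) & \text{if } e>\min(e_p,e_q),\ e_p+e_q\ne 0;\\ e & \text{if } e\le \min(e_p,e_q),\end{cases}$$ $e_p=\max\{x: 2^x\mid p\}$ and $e_q=\max\{x: 2^x\mid q\}$.
   Context: The Cat map over $\mathbb{Z}_{2^e}$ is $v\mapsto \mathbf{C}v\bmod 2^e$ on $\mathbb{Z}_{2^e}^2$; its least period is the least positive integer $n$ with $\mathbf{C}^nv\equiv v\pmod{2^e}$ for all $v$. Put $A=pq+2$, $B=\sqrt{A^2-4}$, $G_n=\left(\frac{A+B}{2}\right)^n+\left(\frac{A-B}{2}\right)^n$, $H_n=\frac{1}{B}\left(\left(\frac{A+B}{2}\right)^n-\left(\frac{A-B}{2}\right)^n\right)$ (integers). The congruence $\frac12 G_n\equiv 1\pmod{2^e}$ is understood to require that $\frac12 G_n$ be an integer. *)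

theory Defs
  imports Complex_Main "HOL-Computational_Algebra.Computational_Algebra" "HOL-Number_Theory.Cong"
begin

definition cat_mat :: "nat \<Rightarrow> nat \<Rightarrow> int \<times> int \<Rightarrow> int \<times> int" where
  "cat_mat p q v = (fst v + int p * snd v, int q * fst v + (1 + int p * int q) * snd v)"

definition cat_fixes :: "nat \<Rightarrow> nat \<Rightarrow> nat \<Rightarrow> nat \<Rightarrow> bool" where
  "cat_fixes p q e n \<longleftrightarrow> (\<forall>x y :: int.
      [fst ((cat_mat p q ^^ n) (x, y)) = x] (mod 2 ^ e) \<and>
      [snd ((cat_mat p q ^^ n) (x, y)) = y] (mod 2 ^ e))"

definition cat_least_period :: "nat \<Rightarrow> nat \<Rightarrow> nat \<Rightarrow> nat \<Rightarrow> bool" where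
  "cat_least_period p q e T \<longleftrightarrow>
     0 < T \<and> cat_fixes p q e T \<and> (\<forall>n. 0 < n \<and> n < T \<longrightarrow> \<not> cat_fixes p q e n)"

definition catA :: "nat \<Rightarrow> nat \<Rightarrow> real" where
  "catA p q = real p * real q + 2"

definition catB :: "nat \<Rightarrow> nat \<Rightarrow> real" where
  "catB p q = sqrt ((catA p q)^2 - 4)"

definition catG :: "nat \<Rightarrow> nat \<Rightarrow> nat \<Rightarrow> real" where
  "catG p q n = ((catA p q + catB p q) / 2) ^ n + ((catA p q - catB p q) / 2) ^ n"

definition catH :: "nat \<Rightarrow> nat \<Rightarrow> nat \<Rightarrow> real" where
  "catH p q n = (((catA p q + catB p q) / 2) ^ n - ((catA p q - catB p q) / 2) ^ n) / catB p q"

definition cat_h :: "nat \<Rightarrow> nat \<Rightarrow> nat \<Rightarrow> int" where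
  "cat_h p q e =
     (let ep = multiplicity (2::nat) p; eq = multiplicity (2::nat) q in
      if ep + eq = 0 then -1
      else if e > min ep eq then int (min ep eq)
      else int e)"

definition cat_cond :: "nat \<Rightarrow> nat \<Rightarrow> nat \<Rightarrow> nat \<Rightarrow> bool" where
  "cat_cond p q e n \<longleftrightarrow>
     (\<exists>k::int. catG p q n / 2 = real_of_int (1 + 2 ^ e * k)) \<and>
     (\<exists>k::int. catH p q n = real_of_int (2 ^ nat (int e - cat_h p q e) * k))"

end

theory Submission
  imports Defs
begin

text \<open>
  The powers of \<open>C\<close> are governed by the Lucas sequence \<open>U\<^sub>n\<close> with
  \<open>U\<^sub>0 = 0\<close>, \<open>U\<^sub>1 = 1\<close>, \<open>U\<^sub>n\<^sub>+\<^sub>2 = A U\<^sub>n\<^sub>+\<^sub>1 - U\<^sub>n\<close>, \<open>A = pq + 2\<close>: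
  one has \<open>H\<^sub>n = U\<^sub>n\<close>, \<open>G\<^sub>n = 2U\<^sub>n\<^sub>+\<^sub>1 - AU\<^sub>n\<close> and
  \<open>C\<^sup>n = [[U\<^sub>n - U\<^sub>n\<^sub>-\<^sub>1, pU\<^sub>n], [qU\<^sub>n, (1+pq)U\<^sub>n - U\<^sub>n\<^sub>-\<^sub>1]]\<close>.
  With \<open>a = U\<^sub>n\<close> and \<open>s = U\<^sub>n - U\<^sub>n\<^sub>-\<^sub>1 - 1\<close>, \<open>C\<^sup>n \<equiv> I\<close> says \<open>2\<^sup>e | s\<close> and
  \<open>2\<^bsup>e - min(e\<^sub>p,e\<^sub>q)\<^esup> | a\<close>, while the stated condition says \<open>2\<^bsup>e+1\<^esup> | pqa + 2s\<close> and
  \<open>2\<^bsup>e-h\<^sub>e\<^esup> | a\<close>. If \<open>p\<close> or \<open>q\<close> is even, the first divisibility of \<open>a\<close> already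
  makes \<open>pqa\<close> divisible by \<open>2\<^bsup>e+1\<^esup>\<close>, and both sides agree. If \<open>p\<close> and \<open>q\<close> are
  odd, the stated condition asks for one more factor 2 in \<open>a\<close>; it comes from the
  Cassini identity \<open>s(s+2) = pq\<cdot>ab\<close> with \<open>b = U\<^sub>n\<^sub>-\<^sub>1\<close> odd.
\<close>

fun lucas_u :: "int \<Rightarrow> nat \<Rightarrow> int" where
  "lucas_u A 0 = 0"
| "lucas_u A (Suc 0) = 1"
| "lucas_u A (Suc (Suc n)) = A * lucas_u A (Suc n) - lucas_u A n"

lemma lucas_u_cassini:
  "(lucas_u A (Suc n) - lucas_u A n)^2 - (A - 2) * lucas_u A (Suc n) * lucas_u A n = 1"
proof (induction n)
  case 0
  then show ?case by simp
next
  case (Suc n)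
  define a where "a = lucas_u A (Suc n)"
  define b where "b = lucas_u A n"
  have "(A*a - b - a)^2 - (A - 2) * (A*a - b) * a = (a - b)^2 - (A - 2) * a * b"
    by (simp add: power2_eq_square algebra_simps)
  then show ?case using Suc by (simp add: a_def b_def)
qed

text \<open>This is \<open>\<alpha>\<^sup>n\<^sup>+\<^sup>1 = U\<^sub>n\<^sub>+\<^sub>1\<alpha> - U\<^sub>n\<close> multiplied by \<open>\<beta> = \<alpha>\<^sup>-\<^sup>1\<close>.\<close>
lemma lucas_u_power:
  fixes \<alpha> \<beta> :: "'a :: comm_ring_1"
  assumes "\<alpha> + \<beta> = of_int A" and "\<alpha> * \<beta> = 1"
  shows "\<alpha> ^ n = of_int (lucas_u A (Suc n)) - of_int (lucas_u A n) * \<beta>"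
proof (induction n)
  case 0
  then show ?case by simp
next
  case (Suc n)
  have "\<alpha> ^ Suc n = \<alpha> * (of_int (lucas_u A (Suc n)) - of_int (lucas_u A n) * \<beta>)"
    using Suc by simp
  also have "\<dots> = of_int (lucas_u A (Suc n)) * \<alpha> - of_int (lucas_u A n) * (\<alpha> * \<beta>)"
    by (simp add: algebra_simps)
  also have "\<dots> = of_int (lucas_u A (Suc n)) * (of_int A - \<beta>) - of_int (lucas_u A n)"
    using assms by (simp add: algebra_simps flip: assms(1))
  finally show ?case by (simp add: algebra_simps)
qed

lemma lucas_u_power_swap:
  fixes \<alpha> \<beta> :: "'a :: comm_ring_1"
  assumes "\<alpha> + \<beta> = of_int A" and "\<alpha> * \<beta> = 1"
  shows "\<beta> ^ n = of_int (lucas_u A (Suc n)) - of_int (lucas_u A n) * \<alpha>"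
  using assms by (intro lucas_u_power) (simp_all add: ac_simps)

lemma lucas_u_binet:
  fixes \<alpha> \<beta> :: "'a :: field"
  assumes "\<alpha> + \<beta> = of_int A" and "\<alpha> * \<beta> = 1" and "\<alpha> \<noteq> \<beta>"
  shows "(\<alpha> ^ n - \<beta> ^ n) / (\<alpha> - \<beta>) = of_int (lucas_u A n)"
proof -
  have "\<alpha> ^ n - \<beta> ^ n = of_int (lucas_u A n) * (\<alpha> - \<beta>)"
    unfolding lucas_u_power[OF assms(1,2)] lucas_u_power_swap[OF assms(1,2)]
    by (simp add: algebra_simps)
  then show ?thesis using assms(3) by simp
qed

lemma lucas_u_power_sum:
  fixes \<alpha> \<beta> :: "'a :: comm_ring_1"
  assumes "\<alpha> + \<beta> = of_int A" and "\<alpha> * \<beta> = 1"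
  shows "\<alpha> ^ n + \<beta> ^ n = of_int (2 * lucas_u A (Suc n) - A * lucas_u A n)"
proof -
  have "\<alpha> ^ n + \<beta> ^ n = 2 * of_int (lucas_u A (Suc n)) - of_int (lucas_u A n) * (\<alpha> + \<beta>)"
    unfolding lucas_u_power[OF assms] lucas_u_power_swap[OF assms]
    by (simp add: algebra_simps)
  then show ?thesis unfolding assms(1) by simp
qed

lemma catA_catB_roots:
  assumes "0 < p" and "0 < q"
  shows "(catA p q + catB p q) / 2 + (catA p q - catB p q) / 2 = of_int (int p * int q + 2)"
    and "(catA p q + catB p q) / 2 * ((catA p q - catB p q) / 2) = 1"
    and "catB p q \<noteq> 0"
proof -
  have "1 \<le> real p * real q"
    using assms by (simp add: Suc_le_eq flip: of_nat_mult)
  then have "3^2 \<le> (catA p q)^2"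
    unfolding catA_def by (intro power_mono) auto
  then have "4 < (catA p q)^2"
    by simp
  then have B: "(catB p q)^2 = (catA p q)^2 - 4" and "catB p q > 0"
    unfolding catB_def by simp_all
  then show "catB p q \<noteq> 0" by simp
  show "(catA p q + catB p q) / 2 * ((catA p q - catB p q) / 2) = 1"
    using B by (simp add: power2_eq_square field_simps)
  show "(catA p q + catB p q) / 2 + (catA p q - catB p q) / 2 = of_int (int p * int q + 2)"
    by (simp add: catA_def field_simps)
qed

lemma catH_eq_lucas_u:
  assumes "0 < p" and "0 < q"
  shows "catH p q n = of_int (lucas_u (int p * int q + 2) n)"
proof -
  have "catB p q = (catA p q + catB p q) / 2 - (catA p q - catB p q) / 2"
    by (simp add: field_simps)
  then show ?thesis
    unfolding catH_def
    using lucas_u_binet[OF catA_catB_roots(1,2)[OF assms]] catA_catB_roots(3)[OF assms]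
    by simp
qed

lemma catG_eq_lucas_u:
  assumes "0 < p" and "0 < q"
  shows "catG p q n = of_int (2 * lucas_u (int p * int q + 2) (Suc n)
                               - (int p * int q + 2) * lucas_u (int p * int q + 2) n)"
  unfolding catG_def by (rule lucas_u_power_sum[OF catA_catB_roots(1,2)[OF assms]])

lemma cat_mat_funpow_Suc:
  "(cat_mat p q ^^ Suc k) (x, y) =
     ((lucas_u (int p * int q + 2) (Suc k) - lucas_u (int p * int q + 2) k) * x
        + int p * lucas_u (int p * int q + 2) (Suc k) * y,
      int q * lucas_u (int p * int q + 2) (Suc k) * x
        + ((1 + int p * int q) * lucas_u (int p * int q + 2) (Suc k)
           - lucas_u (int p * int q + 2) k) * y)"
proof (induction k)
  case 0
  then show ?case by (simp add: cat_mat_def)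
next
  case (Suc k)
  have step: "(cat_mat p q ^^ Suc (Suc k)) (x, y) = cat_mat p q ((cat_mat p q ^^ Suc k) (x, y))"
    by simp
  show ?case
    unfolding step Suc.IH by (simp add: cat_mat_def algebra_simps)
qed

lemma cat_fixes_Suc_iff:
  fixes p q e k :: nat
  defines "a \<equiv> lucas_u (int p * int q + 2) (Suc k)"
    and "b \<equiv> lucas_u (int p * int q + 2) k"
  shows "cat_fixes p q e (Suc k) \<longleftrightarrow>
           (2::int) ^ e dvd a - b - 1 \<and> 2 ^ e dvd int p * a \<and> 2 ^ e dvd int q * a"
proof
  assume "cat_fixes p q e (Suc k)"
  then have "[fst ((cat_mat p q ^^ Suc k) (1, 0)) = 1] (mod 2 ^ e)"
    "[snd ((cat_mat p q ^^ Suc k) (1, 0)) = 0] (mod 2 ^ e)"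
    "[fst ((cat_mat p q ^^ Suc k) (0, 1)) = 0] (mod 2 ^ e)"
    unfolding cat_fixes_def by blast+
  then show "2 ^ e dvd a - b - 1 \<and> 2 ^ e dvd int p * a \<and> 2 ^ e dvd int q * a"
    unfolding cat_mat_funpow_Suc a_def b_def cong_iff_dvd_diff by simp
next
  assume H: "2 ^ e dvd a - b - 1 \<and> 2 ^ e dvd int p * a \<and> 2 ^ e dvd int q * a"
  show "cat_fixes p q e (Suc k)"
    unfolding cat_fixes_def
  proof (intro allI conjI)
    fix x y :: int
    have "2 ^ e dvd (a - b - 1) * x + (int p * a) * y"
      using H by simp
    then show "[fst ((cat_mat p q ^^ Suc k) (x, y)) = x] (mod 2 ^ e)"
      unfolding cat_mat_funpow_Suc a_def[symmetric] b_def[symmetric] cong_iff_dvd_diff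
      by (simp add: algebra_simps)
    have "2 ^ e dvd (int q * a) * x + (a - b - 1) * y + (int q * a) * (int p * y)"
      using H by simp
    then show "[snd ((cat_mat p q ^^ Suc k) (x, y)) = y] (mod 2 ^ e)"
      unfolding cat_mat_funpow_Suc a_def[symmetric] b_def[symmetric] cong_iff_dvd_diff
      by (simp add: algebra_simps)
  qed
qed

lemma half_of_int_eq_one_plus_pow2_iff:
  "(\<exists>k::int. real_of_int (x + 2) / 2 = real_of_int (1 + 2 ^ e * k)) \<longleftrightarrow> (2::int) ^ (e + 1) dvd x"
proof -
  have "real_of_int (x + 2) / 2 = real_of_int (1 + 2 ^ e * k) \<longleftrightarrow> x = 2 ^ (e + 1) * k" for k
  proof -
    have "real_of_int (x + 2) / 2 = real_of_int (1 + 2 ^ e * k) \<longleftrightarrow>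
          real_of_int (x + 2) = real_of_int (2 * (1 + 2 ^ e * k))"
      by (simp add: field_simps)
    also have "\<dots> \<longleftrightarrow> x = 2 ^ (e + 1) * k"
      unfolding of_int_eq_iff by (auto simp: algebra_simps)
    finally show ?thesis .
  qed
  then show ?thesis
    unfolding dvd_def by auto
qed

lemma cat_cond_Suc_iff:
  fixes p q e k :: nat
  assumes "0 < p" and "0 < q"
  defines "a \<equiv> lucas_u (int p * int q + 2) (Suc k)"
    and "b \<equiv> lucas_u (int p * int q + 2) k"
  shows "cat_cond p q e (Suc k) \<longleftrightarrow>
           (2::int) ^ (e + 1) dvd int p * int q * a + 2 * (a - b - 1) \<and>
           2 ^ nat (int e - cat_h p q e) dvd a"
proof -
  have G: "catG p q (Suc k) = real_of_int (int p * int q * a + 2 * (a - b - 1) + 2)"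
    unfolding catG_eq_lucas_u[OF assms(1,2)] a_def b_def by (simp add: algebra_simps)
  have H: "catH p q (Suc k) = real_of_int a"
    unfolding catH_eq_lucas_u[OF assms(1,2)] a_def ..
  show ?thesis
    unfolding cat_cond_def G H half_of_int_eq_one_plus_pow2_iff of_int_eq_iff dvd_def[of _ a]
    by simp
qed

lemma cat_h_exponent:
  "nat (int e - cat_h p q e) =
     (if multiplicity 2 p + multiplicity 2 q = 0 then e + 1
      else e - min (multiplicity 2 p) (multiplicity 2 q))"
  unfolding cat_h_def Let_def by auto

lemma int_eq_pow2_multiplicity_times_odd:
  assumes "0 < p"
  obtains p' :: int where "int p = 2 ^ multiplicity 2 p * p'" and "odd p'"
proof -
  obtain y where "p = 2 ^ multiplicity 2 p * y" and "\<not> 2 dvd y"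
    using multiplicity_decompose'[of p 2] assms by auto
  then show ?thesis
    using that[of "int y"] by (metis even_of_nat of_nat_mult of_nat_numeral of_nat_power)
qed

lemma pow2_dvd_pow2_mult_odd_iff:
  fixes u a :: int
  assumes "odd u"
  shows "2 ^ e dvd 2 ^ k * u * a \<longleftrightarrow> 2 ^ (e - k) dvd a"
proof (cases "k \<le> e")
  case True
  then have "(2::int) ^ e = 2 ^ k * 2 ^ (e - k)"
    by (simp flip: power_add)
  then have "2 ^ e dvd 2 ^ k * u * a \<longleftrightarrow> 2 ^ (e - k) dvd u * a"
    by (simp add: mult.assoc)
  also have "\<dots> \<longleftrightarrow> 2 ^ (e - k) dvd a"
    using assms by (simp add: coprime_dvd_mult_right_iff)
  finally show ?thesis .
next
  case False
  then have "(2::int) ^ e dvd 2 ^ k"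
    by (simp add: le_imp_power_dvd)
  with False show ?thesis
    by (simp add: mult.assoc)
qed

lemma power_dvd_both_iff:
  fixes x a :: "'a :: comm_semiring_1"
  shows "x ^ i dvd a \<and> x ^ j dvd a \<longleftrightarrow> x ^ max i j dvd a"
  by (auto intro: power_le_dvd simp: max_def)

lemma pow2_dvd_mult_odd_parts_iff:
  fixes P Q a :: int
  assumes "odd P" and "odd Q"
  shows "2 ^ e dvd 2 ^ m * P * a \<and> 2 ^ e dvd 2 ^ n * Q * a \<longleftrightarrow> 2 ^ (e - min m n) dvd a"
proof -
  have "max (e - m) (e - n) = e - min m n"
    by auto
  then show ?thesis
    unfolding pow2_dvd_pow2_mult_odd_iff[OF assms(1)] pow2_dvd_pow2_mult_odd_iff[OF assms(2)]
      power_dvd_both_iff by simp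
qed

lemma pow2_dvd_add_double_iff:
  fixes c s :: int
  assumes "2 ^ (e + 1) dvd c"
  shows "2 ^ (e + 1) dvd c + 2 * s \<longleftrightarrow> 2 ^ e dvd s"
  using assms by (simp add: dvd_add_right_iff)

text \<open>With \<open>s = a - b - 1\<close> the Cassini identity reads \<open>s (s + 2) = c a b\<close>; for \<open>e > 0\<close> the
  left side gains a factor \<open>2\<^bsup>e+1\<^esup>\<close>, and \<open>c b\<close> is odd.\<close>
lemma cassini_pow2_dvd_Suc:
  fixes a b c :: int
  assumes "odd c" and "0 < e"
    and cassini: "(a - b)^2 - c * a * b = 1"
    and "2 ^ e dvd a - b - 1" and "2 ^ e dvd a"
  shows "2 ^ (e + 1) dvd a"
proof -
  define s where "s = a - b - 1"
  then have "b = a - s - 1"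
    by simp
  have two: "(2::int) dvd 2 ^ e"
    using assms(2) by simp
  have "even s"
    using dvd_trans[OF two assms(4)] by (simp add: s_def)
  have "even a"
    using dvd_trans[OF two assms(5)] .
  from \<open>even s\<close> \<open>even a\<close> have "odd b"
    unfolding \<open>b = a - s - 1\<close> by simp
  then have "odd (c * b)"
    using assms(1) by simp
  have "2 ^ e * 2 dvd s * (s + 2)"
    using \<open>even s\<close> assms(4) unfolding s_def by (intro mult_dvd_mono) auto
  moreover have "s * (s + 2) = (c * b) * a"
    using cassini unfolding s_def by (simp add: power2_eq_square algebra_simps)
  ultimately have "2 ^ (e + 1) dvd (c * b) * a"
    by (simp add: mult.commute)
  with \<open>odd (c * b)\<close> show ?thesis
    by (simp add: coprime_dvd_mult_right_iff)
qed

lemma pow2_conditions_iff_odd: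
  fixes a b c :: int
  assumes "odd c" and "0 < e" and cassini: "(a - b)^2 - c * a * b = 1"
  shows "2 ^ e dvd a - b - 1 \<and> 2 ^ e dvd a \<longleftrightarrow>
           2 ^ (e + 1) dvd c * a + 2 * (a - b - 1) \<and> 2 ^ (e + 1) dvd a"
proof
  assume H: "2 ^ e dvd a - b - 1 \<and> 2 ^ e dvd a"
  then have "2 ^ (e + 1) dvd a"
    using cassini_pow2_dvd_Suc[OF assms] by blast
  moreover from this have "2 ^ (e + 1) dvd c * a"
    by simp
  ultimately show "2 ^ (e + 1) dvd c * a + 2 * (a - b - 1) \<and> 2 ^ (e + 1) dvd a"
    using H pow2_dvd_add_double_iff by blast
next
  assume H: "2 ^ (e + 1) dvd c * a + 2 * (a - b - 1) \<and> 2 ^ (e + 1) dvd a"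
  then have "2 ^ (e + 1) dvd c * a"
    by simp
  then have "2 ^ e dvd a - b - 1"
    using H pow2_dvd_add_double_iff by blast
  then show "2 ^ e dvd a - b - 1 \<and> 2 ^ e dvd a"
    using H by (auto intro: power_le_dvd)
qed

lemma pow2_conditions_iff_even:
  fixes a s P Q :: int
  assumes "0 < m + n"
  shows "2 ^ e dvd s \<and> 2 ^ (e - min m n) dvd a \<longleftrightarrow>
           2 ^ (e + 1) dvd (2 ^ m * P) * (2 ^ n * Q) * a + 2 * s \<and> 2 ^ (e - min m n) dvd a"
proof -
  have "2 ^ (e + 1) dvd (2 ^ m * P) * (2 ^ n * Q) * a" if "2 ^ (e - min m n) dvd a"
  proof -
    have "2 ^ (m + n) * 2 ^ (e - min m n) dvd 2 ^ (m + n) * (P * Q * a)"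
      using that by (intro mult_dvd_mono) simp_all
    then have "2 ^ (m + n + (e - min m n)) dvd (2 ^ m * P) * (2 ^ n * Q) * a"
      by (simp add: power_add algebra_simps)
    moreover have "e + 1 \<le> m + n + (e - min m n)"
      using assms by auto
    ultimately show ?thesis
      by (rule power_le_dvd)
  qed
  then show ?thesis
    using pow2_dvd_add_double_iff by blast
qed

lemma cat_fixes_iff_cat_cond_Suc:
  assumes "0 < p" and "0 < q" and "0 < e"
  shows "cat_fixes p q e (Suc k) \<longleftrightarrow> cat_cond p q e (Suc k)"
proof -
  define a where "a = lucas_u (int p * int q + 2) (Suc k)"
  define b where "b = lucas_u (int p * int q + 2) k"
  define ep where "ep = multiplicity 2 p"
  define eq where "eq = multiplicity 2 q"
  obtain P where P: "int p = 2 ^ ep * P" "odd P"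
    using int_eq_pow2_multiplicity_times_odd[OF assms(1)] unfolding ep_def by blast
  obtain Q where Q: "int q = 2 ^ eq * Q" "odd Q"
    using int_eq_pow2_multiplicity_times_odd[OF assms(2)] unfolding eq_def by blast
  have "cat_fixes p q e (Suc k) \<longleftrightarrow>
      2 ^ e dvd a - b - 1 \<and> 2 ^ e dvd int p * a \<and> 2 ^ e dvd int q * a"
    unfolding cat_fixes_Suc_iff a_def b_def ..
  also have "\<dots> \<longleftrightarrow> 2 ^ e dvd a - b - 1 \<and> 2 ^ (e - min ep eq) dvd a"
    using pow2_dvd_mult_odd_parts_iff[OF P(2) Q(2), of e ep a eq] unfolding P(1) Q(1) by simp
  finally have fixes_iff:
    "cat_fixes p q e (Suc k) \<longleftrightarrow> 2 ^ e dvd a - b - 1 \<and> 2 ^ (e - min ep eq) dvd a" .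
  have cond_iff: "cat_cond p q e (Suc k) \<longleftrightarrow>
      2 ^ (e + 1) dvd int p * int q * a + 2 * (a - b - 1) \<and>
      2 ^ (if ep + eq = 0 then e + 1 else e - min ep eq) dvd a"
    unfolding cat_cond_Suc_iff[OF assms(1,2)] a_def[symmetric] b_def[symmetric]
      cat_h_exponent ep_def eq_def ..
  show ?thesis
  proof (cases "ep + eq = 0")
    case True
    then have pq: "int p * int q = P * Q" and "odd (P * Q)"
      using P Q by auto
    have "(a - b)^2 - P * Q * a * b = 1"
      using lucas_u_cassini[of "int p * int q + 2" k] unfolding a_def b_def pq by simp
    from pow2_conditions_iff_odd[OF \<open>odd (P * Q)\<close> assms(3) this] show ?thesis
      unfolding fixes_iff cond_iff pq using True by simp
  next
    case False
    then have exponent: "(if ep + eq = 0 then e + 1 else e - min ep eq) = e - min ep eq"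
      by simp
    from pow2_conditions_iff_even[of ep eq e "a - b - 1" a P Q] False show ?thesis
      unfolding fixes_iff cond_iff exponent P(1) Q(1) by simp
  qed
qed

theorem proposition3:
  fixes p q e T :: nat
  assumes "0 < p" and "0 < q" and "0 < e"
  shows "cat_least_period p q e T \<longleftrightarrow>
           (0 < T \<and> cat_cond p q e T \<and> (\<forall>n. 0 < n \<and> n < T \<longrightarrow> \<not> cat_cond p q e n))"
proof -
  have "cat_fixes p q e n \<longleftrightarrow> cat_cond p q e n" if "0 < n" for n
    using that cat_fixes_iff_cat_cond_Suc[OF assms] by (cases n) auto
  then show ?thesis
    unfolding cat_least_period_def by blast
qed

end
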